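(* Let $N\geqslant 2$, $1<p<N$, $p<q<p+\frac{p^2}{N}$, $a,\mu>0$ with $\mu a^{q(1-\gamma_{q})}<\alpha(N,p,q)$, and let \[h(t)=\frac{1}{p}t^p-\frac{\mu}{q}C_{N,p,q}a^{q(1-\gamma_{q})}t^{q\gamma_{q}}-\frac{1}{p^*S^{p^*/p}}t^{p^*},\quad t>0.\] Then $h$ has exactly two critical points on $(0,\infty)$, one a local minimum at negative level and the other a global maximum at positive level. In addition, there exist $R_{1}>R_{0}>0$ such that $h(R_{0})=h(R_{1})=0$, and $h(t)>0$ if and only if $t\in(R_{0},R_{1})$.
   Context: $p^*=\frac{Np}{N-p}$, $\gamma_{q}=\frac{N(q-p)}{pq}$. $S$ is the optimal constant in $S\lVert u\rVert_{p^*}^p\leqslant\lVert\nabla u\rVert_p^p$; $C_{N,p,q}$ is the optimal constant in $\lVert u\rVert_q^q\leqslant C_{N,p,q}\lVert\nabla u\rVert_p^{q\gamma_q}\lVert u\rVert_p^{q(1-\gamma_q)}$. $\alpha(N,p,q)=\min\{C',C''\}$ with $C'=\Big(\frac{p^*S^{p^*/p}(p-q\gamma_{q})}{p(p^*-q\gamma_{q})}\Big)^{\frac{p-q\gamma_{q}}{p^*-p}}\frac{q(p^*-p)}{pC_{N,p,q}(p^*-q\gamma_{q})}$, $C''=\frac{pp^*}{N\gamma_{q}C_{N,p,q}(p^*-p)}\Big(\frac{q\gamma_{q}S^{N/p}}{p-q\gamma_{q}}\Big)^{\frac{p-q\gamma_{q}}{p}}$. *)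

theory Defs
  imports "HOL-Analysis.Analysis"
begin

definition pstar :: "real \<Rightarrow> real \<Rightarrow> real" where
  "pstar N p = N * p / (N - p)"

definition gammaq :: "real \<Rightarrow> real \<Rightarrow> real \<Rightarrow> real" where
  "gammaq N p q = N * (q - p) / (p * q)"

(* S: Sobolev constant, C: Gagliardo-Nirenberg constant C_{N,p,q} *)
definition alpha_C1 :: "real \<Rightarrow> real \<Rightarrow> real \<Rightarrow> real \<Rightarrow> real \<Rightarrow> real" where
  "alpha_C1 N p q S C =
     (let ps = pstar N p; g = gammaq N p q in
      ((ps * S powr (ps / p) * (p - q * g)) / (p * (ps - q * g))) powr ((p - q * g) / (ps - p))
      * (q * (ps - p)) / (p * C * (ps - q * g)))"

definition alpha_C2 :: "real \<Rightarrow> real \<Rightarrow> real \<Rightarrow> real \<Rightarrow> real \<Rightarrow> real" where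
  "alpha_C2 N p q S C =
     (let ps = pstar N p; g = gammaq N p q in
      (p * ps) / (N * g * C * (ps - p))
      * ((q * g * S powr (N / p)) / (p - q * g)) powr ((p - q * g) / p))"

definition alpha :: "real \<Rightarrow> real \<Rightarrow> real \<Rightarrow> real \<Rightarrow> real \<Rightarrow> real" where
  "alpha N p q S C = min (alpha_C1 N p q S C) (alpha_C2 N p q S C)"

definition hfun :: "real \<Rightarrow> real \<Rightarrow> real \<Rightarrow> real \<Rightarrow> real \<Rightarrow> real \<Rightarrow> real \<Rightarrow> real \<Rightarrow> real" where
  "hfun N p q S C a \<mu> t =
     (let ps = pstar N p; g = gammaq N p q in
      t powr p / p - \<mu> / q * C * a powr (q * (1 - g)) * t powr (q * g)
      - t powr ps / (ps * S powr (ps / p)))"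

end

theory Submission
  imports Defs
begin

(* On (0, infinity) write h(t) = t^r phi(t) and h'(t) = t^(r-1) k(t), where r = q gamma_q < p < p*
   and both phi and k have the form c t^a - d - e t^b with 0 < a < b and c, d, e > 0. Such a
   function increases up to a single peak and decreases afterwards, and it is negative near 0 and
   near infinity; so once it is positive somewhere, it is positive exactly between two zeros.
   The bound mu a^(q(1 - gamma_q)) < C' says precisely that phi is positive at its peak, which
   gives the zeros R0 < R1 of h. Since h rises after R0, h' is positive somewhere, hence h'
   changes sign (-, +, -) at two points t1 < t2: the local minimum and the global maximum. *)

definition positive_between_zeros :: "(real \<Rightarrow> real) \<Rightarrow> real \<Rightarrow> real \<Rightarrow> bool" where
  "positive_between_zeros g z1 z2 \<longleftrightarrow> 0 < z1 \<and> z1 < z2 \<and>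
     (\<forall>t>0. (0 < g t \<longleftrightarrow> z1 < t \<and> t < z2) \<and> (g t = 0 \<longleftrightarrow> t = z1 \<or> t = z2))"

lemma positive_between_zerosD:
  assumes "positive_between_zeros g z1 z2" "0 < t"
  shows "0 < g t \<longleftrightarrow> z1 < t \<and> t < z2"
    and "g t = 0 \<longleftrightarrow> t = z1 \<or> t = z2"
    and "g t < 0 \<longleftrightarrow> t < z1 \<or> z2 < t"
  using assms unfolding positive_between_zeros_def
  by (auto simp: not_less_iff_gr_or_eq linorder_not_less[symmetric])

lemma positive_between_zeros_mult:
  assumes "positive_between_zeros g z1 z2"
    and "\<And>t. 0 < t \<Longrightarrow> 0 < w t" and "\<And>t. 0 < t \<Longrightarrow> f t = w t * g t"
  shows "positive_between_zeros f z1 z2"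
proof -
  have "0 < f t \<longleftrightarrow> 0 < g t" "f t = 0 \<longleftrightarrow> g t = 0" if "0 < t" for t
    using assms(2,3)[OF that] by (auto simp: zero_less_mult_iff)
  then show ?thesis using assms(1) unfolding positive_between_zeros_def by simp
qed

lemma DERIV_pos_imp_less_on_pos_reals:
  fixes f f' :: "real \<Rightarrow> real"
  assumes deriv: "\<And>t. 0 < t \<Longrightarrow> (f has_real_derivative f' t) (at t)"
    and "0 < x" "x < y" and pos: "\<And>t. x < t \<Longrightarrow> t < y \<Longrightarrow> 0 < f' t"
  shows "f x < f y"
proof (rule DERIV_pos_imp_increasing_open[OF \<open>x < y\<close>])
  show "\<exists>d. (f has_real_derivative d) (at t) \<and> 0 < d" if "x < t" "t < y" for t
  proof -
    have "0 < t" using that \<open>0 < x\<close> by simp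
    then show ?thesis using deriv pos that by blast
  qed
  show "continuous_on {x..y} f"
  proof (intro continuous_at_imp_continuous_on ballI)
    fix z assume "z \<in> {x..y}"
    then have "0 < z" using \<open>0 < x\<close> by simp
    then show "isCont f z" using deriv DERIV_isCont by blast
  qed
qed

lemma DERIV_neg_imp_greater_on_pos_reals:
  fixes f f' :: "real \<Rightarrow> real"
  assumes deriv: "\<And>t. 0 < t \<Longrightarrow> (f has_real_derivative f' t) (at t)"
    and "0 < x" "x < y" and neg: "\<And>t. x < t \<Longrightarrow> t < y \<Longrightarrow> f' t < 0"
  shows "f y < f x"
proof -
  have "- f x < - f y"
    using assms by (intro DERIV_pos_imp_less_on_pos_reals[of "\<lambda>t. - f t" "\<lambda>t. - f' t"])
      (auto intro: derivative_intros)
  then show ?thesis by simp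
qed

lemma unimodal_positive_between_zeros:
  fixes g :: "real \<Rightarrow> real"
  assumes cont: "continuous_on {0<..} g"
    and inc: "\<And>x y. 0 < x \<Longrightarrow> x < y \<Longrightarrow> y \<le> \<tau> \<Longrightarrow> g x < g y"
    and dec: "\<And>x y. \<tau> \<le> x \<Longrightarrow> x < y \<Longrightarrow> g y < g x"
    and s0: "0 < s0" "s0 < \<tau>" "g s0 < 0" and s1: "\<tau> < s1" "g s1 < 0" and "0 < g \<tau>"
  shows "\<exists>z1 z2. positive_between_zeros g z1 z2"
proof -
  have cont_on: "continuous_on {a..b} g" if "0 < a" for a b
    by (rule continuous_on_subset[OF cont]) (use that in auto)
  obtain z1 where z1: "s0 \<le> z1" "z1 \<le> \<tau>" "g z1 = 0"
    using IVT'[of g s0 0 \<tau>] s0 \<open>0 < g \<tau>\<close> cont_on[OF \<open>0 < s0\<close>] by auto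
  obtain z2 where z2: "\<tau> \<le> z2" "z2 \<le> s1" "g z2 = 0"
    using IVT2'[of g s1 0 \<tau>] s0 s1 \<open>0 < g \<tau>\<close> cont_on[of \<tau>] by auto
  have "z1 < \<tau>" "\<tau> < z2"
    using z1 z2 \<open>0 < g \<tau>\<close> by (auto simp: order.order_iff_strict)
  have "0 < z1" using z1 s0 by simp
  have "(0 < g t \<longleftrightarrow> z1 < t \<and> t < z2) \<and> (g t = 0 \<longleftrightarrow> t = z1 \<or> t = z2)"
    if "0 < t" for t
  proof -
    consider "t < z1" | "t = z1" | "z1 < t" "t \<le> \<tau>" | "\<tau> < t" "t < z2" | "t = z2" | "z2 < t"
      by linarith
    then show ?thesis
    proof cases
      case 1 then show ?thesis using inc[OF that 1 \<open>z1 \<le> \<tau>\<close>] z1 \<open>\<tau> < z2\<close> by simp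
    next
      case 3 then show ?thesis using inc[OF \<open>0 < z1\<close> 3] z1 \<open>\<tau> < z2\<close> by simp
    next
      case 4 then show ?thesis using dec[of t z2] z2 \<open>z1 < \<tau>\<close> by simp
    next
      case 6 then show ?thesis using dec[OF \<open>\<tau> \<le> z2\<close> 6] z2 \<open>z1 < \<tau>\<close> \<open>\<tau> < z2\<close> by simp
    qed (use z1 z2 \<open>z1 < \<tau>\<close> \<open>\<tau> < z2\<close> in simp_all)
  qed
  then have "positive_between_zeros g z1 z2"
    unfolding positive_between_zeros_def using \<open>0 < z1\<close> \<open>z1 < \<tau>\<close> \<open>\<tau> < z2\<close> by simp
  then show ?thesis by blast
qed

definition powr_bump :: "real \<Rightarrow> real \<Rightarrow> real \<Rightarrow> real \<Rightarrow> real \<Rightarrow> real \<Rightarrow> real" where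
  "powr_bump c a d e b t = c * t powr a - d - e * t powr b"

lemma powr_bump_unimodal:
  fixes a b c d e :: real
  assumes "0 < a" "a < b" "0 < c" "0 < e"
  defines "\<tau> \<equiv> (c * a / (e * b)) powr (1 / (b - a))"
  shows "0 < \<tau>"
    and "\<And>x y. 0 < x \<Longrightarrow> x < y \<Longrightarrow> y \<le> \<tau> \<Longrightarrow> powr_bump c a d e b x < powr_bump c a d e b y"
    and "\<And>x y. \<tau> \<le> x \<Longrightarrow> x < y \<Longrightarrow> powr_bump c a d e b y < powr_bump c a d e b x"
proof -
  define \<kappa> where "\<kappa> = c * a / (e * b)"
  have "0 < b" "0 < \<kappa>" using assms by (auto simp: \<kappa>_def)
  then have \<tau>_powr: "\<tau> powr (b - a) = \<kappa>"
    unfolding \<tau>_def \<kappa>_def[symmetric] using \<open>a < b\<close> by (simp add: powr_powr)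
  show "0 < \<tau>" unfolding \<tau>_def \<kappa>_def[symmetric] using \<open>0 < \<kappa>\<close> by simp
  have deriv: "(powr_bump c a d e b has_real_derivative
      t powr (a - 1) * (c * a - e * b * t powr (b - a))) (at t)" if "0 < t" for t
  proof -
    have "(powr_bump c a d e b has_real_derivative
        c * (a * t powr (a - 1)) - 0 - e * (b * t powr (b - 1))) (at t)"
      unfolding powr_bump_def[abs_def] using that by (intro derivative_eq_intros) auto
    moreover have "t powr (a - 1) * t powr (b - a) = t powr (b - 1)"
      using that by (simp add: powr_add[symmetric])
    ultimately show ?thesis by (simp add: algebra_simps)
  qed
  show "powr_bump c a d e b x < powr_bump c a d e b y" if "0 < x" "x < y" "y \<le> \<tau>" for x y
  proof (rule DERIV_pos_imp_less_on_pos_reals[OF deriv \<open>0 < x\<close> \<open>x < y\<close>])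
    fix t assume "x < t" "t < y"
    then have "t powr (b - a) < \<kappa>"
      using powr_less_mono2[of "b - a" t \<tau>] \<tau>_powr \<open>0 < x\<close> \<open>a < b\<close> that by simp
    then show "0 < t powr (a - 1) * (c * a - e * b * t powr (b - a))"
      using \<open>0 < e\<close> \<open>0 < b\<close> \<open>0 < x\<close> \<open>x < t\<close> by (simp add: \<kappa>_def field_simps)
  qed
  show "powr_bump c a d e b y < powr_bump c a d e b x" if "\<tau> \<le> x" "x < y" for x y
  proof (rule DERIV_neg_imp_greater_on_pos_reals[OF deriv _ \<open>x < y\<close>])
    show "0 < x" using that \<open>0 < \<tau>\<close> by simp
    fix t assume "x < t" "t < y"
    then have "\<kappa> < t powr (b - a)"
      using powr_less_mono2[of "b - a" \<tau> t] \<tau>_powr \<open>0 < \<tau>\<close> \<open>a < b\<close> that by simp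
    then show "t powr (a - 1) * (c * a - e * b * t powr (b - a)) < 0"
      using \<open>0 < e\<close> \<open>0 < b\<close> \<open>0 < \<tau>\<close> \<open>\<tau> \<le> x\<close> \<open>x < t\<close>
      by (simp add: \<kappa>_def field_simps mult_pos_neg)
  qed
qed

lemma powr_bump_negative_near_zero:
  fixes a b c d e \<tau> :: real
  assumes "0 < a" "0 < c" "0 < d" "0 \<le> e" "0 < \<tau>"
  shows "\<exists>s. 0 < s \<and> s < \<tau> \<and> powr_bump c a d e b s < 0"
proof -
  define \<rho> where "\<rho> = (d / c) powr (1 / a)"
  define s where "s = min \<tau> \<rho> / 2"
  have "0 < \<rho>" using assms by (simp add: \<rho>_def)
  then have "0 < s" "s < \<tau>" "s < \<rho>" unfolding s_def using \<open>0 < \<tau>\<close> by auto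
  then have "s powr a < \<rho> powr a" using \<open>0 < a\<close> by (intro powr_less_mono2) auto
  then have "c * s powr a < d" using assms by (simp add: \<rho>_def powr_powr field_simps)
  moreover have "0 \<le> e * s powr b" using \<open>0 \<le> e\<close> by simp
  ultimately show ?thesis using \<open>0 < s\<close> \<open>s < \<tau>\<close> unfolding powr_bump_def by force
qed

lemma powr_bump_negative_at_top:
  fixes a b c d e \<tau> :: real
  assumes "a < b" "0 < c" "0 \<le> d" "0 < e"
  shows "\<exists>s>\<tau>. powr_bump c a d e b s < 0"
proof -
  define \<rho> where "\<rho> = (c / e) powr (1 / (b - a))"
  define s where "s = max \<tau> \<rho> + 1"
  have "0 \<le> \<rho>" by (simp add: \<rho>_def)
  then have "\<tau> < s" "0 < s" "\<rho> < s" unfolding s_def by (simp_all add: max_def)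
  then have "\<rho> powr (b - a) < s powr (b - a)"
    using \<open>0 \<le> \<rho>\<close> \<open>a < b\<close> by (intro powr_less_mono2) auto
  then have "c < e * s powr (b - a)" using assms by (simp add: \<rho>_def powr_powr field_simps)
  moreover have "s powr b = s powr a * s powr (b - a)"
    using \<open>0 < s\<close> by (simp add: powr_add[symmetric])
  ultimately have "c * s powr a < e * s powr b"
    using \<open>0 < s\<close> by (simp add: mult.left_commute)
  then show ?thesis using \<open>\<tau> < s\<close> \<open>0 \<le> d\<close> unfolding powr_bump_def by force
qed

lemma powr_bump_positive_between_zeros:
  fixes a b c d e t0 :: real
  assumes "0 < a" "a < b" "0 < c" "0 < d" "0 < e"
    and "0 < t0" "0 < powr_bump c a d e b t0"
  shows "\<exists>z1 z2. positive_between_zeros (powr_bump c a d e b) z1 z2"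
proof -
  define \<tau> where "\<tau> = (c * a / (e * b)) powr (1 / (b - a))"
  note unimodal = powr_bump_unimodal[OF assms(1,2,3,5), folded \<tau>_def]
  obtain s0 where s0: "0 < s0" "s0 < \<tau>" "powr_bump c a d e b s0 < 0"
    using powr_bump_negative_near_zero[of a c d e \<tau>] unimodal(1) assms by auto
  obtain s1 where s1: "\<tau> < s1" "powr_bump c a d e b s1 < 0"
    using powr_bump_negative_at_top[of a b c d e \<tau>] assms by auto
  have "powr_bump c a d e b t0 \<le> powr_bump c a d e b \<tau>"
    using unimodal(2)[of t0 \<tau>] unimodal(3)[of \<tau> t0] assms
    by (cases t0 \<tau> rule: linorder_cases) (auto intro: less_imp_le)
  then have peak: "0 < powr_bump c a d e b \<tau>" using assms by simp
  have cont: "continuous_on {0<..} (powr_bump c a d e b)"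
    unfolding powr_bump_def by (intro continuous_intros) auto
  show ?thesis by (rule unimodal_positive_between_zeros[OF cont unimodal(2,3) s0 s1 peak])
qed

definition local_min_global_max_profile :: "(real \<Rightarrow> real) \<Rightarrow> bool" where
  "local_min_global_max_profile h \<longleftrightarrow>
     (\<exists>t1 t2. t1 > 0 \<and> t2 > 0 \<and> t1 \<noteq> t2 \<and>
        {t. t > 0 \<and> (h has_real_derivative 0) (at t)} = {t1, t2} \<and>
        (\<exists>e>0. \<forall>s. s > 0 \<and> \<bar>s - t1\<bar> < e \<longrightarrow> h t1 \<le> h s) \<and> h t1 < 0 \<and>
        (\<forall>s>0. h s \<le> h t2) \<and> h t2 > 0)
   \<and> (\<exists>R0 R1. 0 < R0 \<and> R0 < R1 \<and> h R0 = 0 \<and> h R1 = 0 \<and>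
        (\<forall>t>0. h t > 0 \<longleftrightarrow> R0 < t \<and> t < R1))"

lemma monotone_pieces_of_derivative_sign:
  fixes h h' :: "real \<Rightarrow> real"
  assumes deriv: "\<And>t. 0 < t \<Longrightarrow> (h has_real_derivative h' t) (at t)"
    and h': "positive_between_zeros h' t1 t2"
  shows "\<And>x y. 0 < x \<Longrightarrow> x < y \<Longrightarrow> y \<le> t1 \<Longrightarrow> h y < h x"
    and "\<And>x y. t1 \<le> x \<Longrightarrow> x < y \<Longrightarrow> y \<le> t2 \<Longrightarrow> h x < h y"
    and "\<And>x y. t2 \<le> x \<Longrightarrow> x < y \<Longrightarrow> h y < h x"
proof -
  have "0 < t1" "t1 < t2" using h' unfolding positive_between_zeros_def by auto
  have h'_neg: "h' t < 0" if "0 < t" "t < t1 \<or> t2 < t" for t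
    using positive_between_zerosD(3)[OF h' that(1)] that(2) by simp
  have h'_pos: "0 < h' t" if "t1 < t" "t < t2" for t
    using positive_between_zerosD(1)[OF h'] that \<open>0 < t1\<close> by simp
  show "h y < h x" if "0 < x" "x < y" "y \<le> t1" for x y
    using that by (intro DERIV_neg_imp_greater_on_pos_reals[OF deriv] h'_neg) auto
  show "h x < h y" if "t1 \<le> x" "x < y" "y \<le> t2" for x y
    using that \<open>0 < t1\<close> by (intro DERIV_pos_imp_less_on_pos_reals[OF deriv] h'_pos) auto
  show "h y < h x" if "t2 \<le> x" "x < y" for x y
    using that \<open>0 < t1\<close> \<open>t1 < t2\<close>
    by (intro DERIV_neg_imp_greater_on_pos_reals[OF deriv] h'_neg) auto
qed

lemma positive_between_zeros_imp_derivative_pos: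
  fixes h h' :: "real \<Rightarrow> real"
  assumes deriv: "\<And>t. 0 < t \<Longrightarrow> (h has_real_derivative h' t) (at t)"
    and h: "positive_between_zeros h R0 R1"
  shows "\<exists>t>0. 0 < h' t"
proof (rule ccontr)
  assume "\<not> (\<exists>t>0. 0 < h' t)"
  then have h'_nonpos: "h' t \<le> 0" if "0 < t" for t
    using that by (meson not_less)
  have "0 < R0" "R0 < R1" using h unfolding positive_between_zeros_def by auto
  have "h ((R0 + R1) / 2) \<le> h R0"
  proof (rule DERIV_nonpos_imp_nonincreasing[of R0 "(R0 + R1) / 2" h])
    show "R0 \<le> (R0 + R1) / 2" using \<open>R0 < R1\<close> by simp
    show "\<exists>y. (h has_real_derivative y) (at x) \<and> y \<le> 0" if "R0 \<le> x" for x
      using deriv[of x] h'_nonpos[of x] that \<open>0 < R0\<close> by (intro exI[of _ "h' x"]) simp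
  qed
  moreover have "h R0 = 0" "0 < h ((R0 + R1) / 2)"
    using positive_between_zerosD(1,2)[OF h] \<open>0 < R0\<close> \<open>R0 < R1\<close> by simp_all
  ultimately show False by simp
qed

lemma critical_points_eq_zeros_of_derivative:
  fixes h h' :: "real \<Rightarrow> real"
  assumes deriv: "\<And>t. 0 < t \<Longrightarrow> (h has_real_derivative h' t) (at t)"
    and h': "positive_between_zeros h' t1 t2"
  shows "{t. t > 0 \<and> (h has_real_derivative 0) (at t)} = {t1, t2}"
proof -
  have "(h has_real_derivative 0) (at t) \<longleftrightarrow> h' t = 0" if "0 < t" for t
    using DERIV_unique[OF deriv[OF that]] deriv[OF that] by metis
  moreover have "0 < t1" "t1 < t2" using h' unfolding positive_between_zeros_def by auto
  ultimately show ?thesis using positive_between_zerosD(2)[OF h'] by auto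
qed

lemma local_min_global_max_profileI:
  fixes h h' :: "real \<Rightarrow> real"
  assumes deriv: "\<And>t. 0 < t \<Longrightarrow> (h has_real_derivative h' t) (at t)"
    and h': "positive_between_zeros h' t1 t2"
    and h: "positive_between_zeros h R0 R1"
  shows "local_min_global_max_profile h"
proof -
  note dec1 = monotone_pieces_of_derivative_sign(1)[OF deriv h']
    and inc = monotone_pieces_of_derivative_sign(2)[OF deriv h']
    and dec2 = monotone_pieces_of_derivative_sign(3)[OF deriv h']
  have "0 < t1" "t1 < t2" "0 < R0" "R0 < R1"
    using h h' unfolding positive_between_zeros_def by auto
  have h_nonpos: "h t \<le> 0" if "0 < t" "t \<le> R0" for t
    using positive_between_zerosD(1)[OF h that(1)] that(2) by simp
  have "h R0 = 0" "h R1 = 0"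
    using positive_between_zerosD(2)[OF h] \<open>0 < R0\<close> \<open>R0 < R1\<close> by simp_all
  have "t1 < R0"
  proof (rule ccontr)
    assume "\<not> t1 < R0"
    then have "h R0 < h (R0 / 2)" using dec1[of "R0 / 2" R0] \<open>0 < R0\<close> by simp
    then show False using h_nonpos[of "R0 / 2"] \<open>h R0 = 0\<close> \<open>0 < R0\<close> by simp
  qed
  have "h t1 \<noteq> 0"
    using positive_between_zerosD(2)[OF h \<open>0 < t1\<close>] \<open>t1 < R0\<close> \<open>R0 < R1\<close> by simp
  then have "h t1 < 0" using h_nonpos[OF \<open>0 < t1\<close>] \<open>t1 < R0\<close> by simp
  have below_t2: "h s \<le> h t2" if "t1 < s" for s
    using inc[of s t2] dec2[of t2 s] that by (cases s t2 rule: linorder_cases) auto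
  have "0 < h ((R0 + R1) / 2)"
    using positive_between_zerosD(1)[OF h] \<open>0 < R0\<close> \<open>R0 < R1\<close> by simp
  then have "h t2 > 0" using below_t2[of "(R0 + R1) / 2"] \<open>t1 < R0\<close> \<open>R0 < R1\<close> by simp
  then have "\<forall>s>0. h s \<le> h t2"
    using below_t2 h_nonpos \<open>t1 < R0\<close> by (metis linorder_not_le order.strict_trans1 less_imp_le)
  have "h t1 \<le> h s" if "0 < s" "\<bar>s - t1\<bar> < t2 - t1" for s
    using dec1[of s t1] inc[of t1 s] that by (cases s t1 rule: linorder_cases) auto
  then have "\<exists>e>0. \<forall>s. s > 0 \<and> \<bar>s - t1\<bar> < e \<longrightarrow> h t1 \<le> h s"
    using \<open>t1 < t2\<close> by (intro exI[of _ "t2 - t1"]) auto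
  note critical = critical_points_eq_zeros_of_derivative[OF deriv h']
  have positive: "\<forall>t>0. h t > 0 \<longleftrightarrow> R0 < t \<and> t < R1"
    using positive_between_zerosD(1)[OF h] by simp
  show ?thesis
    unfolding local_min_global_max_profile_def
    by (rule conjI, rule exI[of _ t1], rule exI[of _ t2],
        use critical \<open>0 < t1\<close> \<open>t1 < t2\<close> \<open>h t1 < 0\<close> \<open>h t2 > 0\<close> \<open>\<forall>s>0. h s \<le> h t2\<close>
          \<open>\<exists>e>0. \<forall>s. s > 0 \<and> \<bar>s - t1\<bar> < e \<longrightarrow> h t1 \<le> h s\<close> in simp,
        rule exI[of _ R0], rule exI[of _ R1],
        use positive \<open>0 < R0\<close> \<open>R0 < R1\<close> \<open>h R0 = 0\<close> \<open>h R1 = 0\<close> in simp)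
qed

lemma powr_three_terms_profile:
  fixes r p P A B t0 :: real
  assumes "0 < r" "r < p" "p < P" "0 < A" "0 < B"
  defines "h \<equiv> \<lambda>t. t powr p / p - A * t powr r - B * t powr P"
  assumes "0 < t0" "0 < h t0"
  shows "local_min_global_max_profile h"
proof -
  have "0 < p" using assms by simp
  define \<phi> where "\<phi> = powr_bump (1 / p) (p - r) A B (P - r)"
  have h_eq: "h t = t powr r * \<phi> t" if "0 < t" for t
  proof -
    have "t powr r * t powr (p - r) = t powr p" "t powr r * t powr (P - r) = t powr P"
      using that by (simp_all add: powr_add[symmetric])
    then show ?thesis unfolding h_def \<phi>_def powr_bump_def by (simp add: algebra_simps)
  qed
  have "0 < \<phi> t0" using h_eq \<open>0 < t0\<close> \<open>0 < h t0\<close> by (simp add: zero_less_mult_iff)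
  then obtain R0 R1 where "positive_between_zeros \<phi> R0 R1"
    using powr_bump_positive_between_zeros[of "p - r" "P - r" "1 / p" A B t0] assms
    unfolding \<phi>_def by auto
  then have h_zeros: "positive_between_zeros h R0 R1"
    by (rule positive_between_zeros_mult[where w = "\<lambda>t. t powr r"]) (use h_eq in auto)
  define k where "k = powr_bump 1 (p - r) (r * A) (B * P) (P - r)"
  define h' where "h' t = t powr (r - 1) * k t" for t
  have deriv: "(h has_real_derivative h' t) (at t)" if "0 < t" for t
  proof -
    have "(h has_real_derivative p * t powr (p - 1) / p - A * (r * t powr (r - 1))
        - B * (P * t powr (P - 1))) (at t)"
      unfolding h_def using that \<open>0 < p\<close> by (intro derivative_eq_intros) auto
    moreover have "t powr (r - 1) * t powr (p - r) = t powr (p - 1)"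
      "t powr (r - 1) * t powr (P - r) = t powr (P - 1)"
      using that by (simp_all add: powr_add[symmetric])
    ultimately show ?thesis
      unfolding h'_def k_def powr_bump_def using \<open>0 < p\<close> by (simp add: algebra_simps)
  qed
  obtain t where "0 < t" "0 < h' t"
    using positive_between_zeros_imp_derivative_pos[OF deriv h_zeros] by blast
  then have "0 < k t" by (simp add: h'_def zero_less_mult_iff)
  then obtain t1 t2 where "positive_between_zeros k t1 t2"
    using powr_bump_positive_between_zeros[of "p - r" "P - r" 1 "r * A" "B * P" t] assms \<open>0 < t\<close>
    unfolding k_def by auto
  then have "positive_between_zeros h' t1 t2"
    by (rule positive_between_zeros_mult[where w = "\<lambda>t. t powr (r - 1)"]) (auto simp: h'_def)
  from local_min_global_max_profileI[OF deriv this h_zeros] show ?thesis .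
qed

(* t0 is the peak of t powr (p - r) / p - B * t powr (P - r), and the bound on A is its height. *)
lemma powr_three_terms_positive_at_peak:
  fixes r p P A B :: real
  assumes "0 < r" "r < p" "p < P" "0 < B"
    and A: "A < ((p - r) / (p * B * (P - r))) powr ((p - r) / (P - p)) * (P - p) / (p * (P - r))"
  defines "t0 \<equiv> ((p - r) / (p * B * (P - r))) powr (1 / (P - p))"
  shows "0 < t0" and "0 < t0 powr p / p - A * t0 powr r - B * t0 powr P"
proof -
  define \<beta> where "\<beta> = (p - r) / (p * B * (P - r))"
  have "0 < \<beta>" using assms by (simp add: \<beta>_def)
  have t0_eq: "t0 = \<beta> powr (1 / (P - p))" by (simp add: t0_def \<beta>_def)
  then show "0 < t0" using \<open>0 < \<beta>\<close> by simp
  have t0_pow: "t0 powr (P - p) = \<beta>" "t0 powr (p - r) = \<beta> powr ((p - r) / (P - p))"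
    using t0_eq \<open>0 < \<beta>\<close> \<open>p < P\<close> by (simp_all add: powr_powr)
  have "t0 powr p = t0 powr r * t0 powr (p - r)"
    "t0 powr P = t0 powr r * t0 powr (p - r) * t0 powr (P - p)"
    using \<open>0 < t0\<close> by (simp_all add: powr_add[symmetric])
  then have "t0 powr p / p - A * t0 powr r - B * t0 powr P
      = t0 powr r * (t0 powr (p - r) * (1 / p - B * \<beta>) - A)"
    using t0_pow by (simp add: algebra_simps)
  also have "1 / p - B * \<beta> = (P - p) / (p * (P - r))"
    using assms by (simp add: \<beta>_def field_simps)
  finally show "0 < t0 powr p / p - A * t0 powr r - B * t0 powr P"
    using A \<open>0 < t0\<close> t0_pow by (simp add: \<beta>_def)
qed

lemma q_gammaq_bounds:
  fixes N p q :: real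
  assumes "0 < N" "0 < p" "p < q" "q < p + p\<^sup>2 / N"
  shows "0 < q * gammaq N p q" "q * gammaq N p q < p"
proof -
  have eq: "q * gammaq N p q = N * (q - p) / p" using assms by (simp add: gammaq_def)
  then show "0 < q * gammaq N p q" using assms by simp
  have "N * (q - p) < p\<^sup>2" using assms by (simp add: field_simps)
  then show "q * gammaq N p q < p"
    unfolding eq using assms by (simp add: field_simps power2_eq_square)
qed

lemma less_pstar:
  fixes N p :: real
  assumes "0 < p" "p < N"
  shows "p < pstar N p"
  using assms by (simp add: pstar_def field_simps)

lemma alpha_C1_eq:
  fixes N p q S C :: real
  assumes "0 < S" "0 < pstar N p"
  defines "r \<equiv> q * gammaq N p q" and "P \<equiv> pstar N p"
  defines "B \<equiv> 1 / (P * S powr (P / p))"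
  shows "alpha_C1 N p q S C
    = ((p - r) / (p * B * (P - r))) powr ((p - r) / (P - p)) * (q * (P - p)) / (p * C * (P - r))"
proof -
  have "alpha_C1 N p q S C = (P * S powr (P / p) * (p - r) / (p * (P - r))) powr ((p - r) / (P - p))
      * (q * (P - p)) / (p * C * (P - r))"
    unfolding alpha_C1_def Let_def r_def P_def by simp
  also have "P * S powr (P / p) * (p - r) / (p * (P - r)) = (p - r) / (p * B * (P - r))"
    using assms by (simp add: B_def field_simps)
  finally show ?thesis .
qed

theorem lemma4p2:
  fixes N :: nat and p q a \<mu> S C :: real
  assumes "N \<ge> 2" and "1 < p" and "p < real N"
    and "p < q" and "q < p + p^2 / real N"
    and "a > 0" and "\<mu> > 0"
    and "S > 0" and "C > 0"
    and "\<mu> * a powr (q * (1 - gammaq (real N) p q)) < alpha (real N) p q S C"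
  defines "h \<equiv> hfun (real N) p q S C a \<mu>"
  shows "(\<exists>t1 t2. t1 > 0 \<and> t2 > 0 \<and> t1 \<noteq> t2 \<and>
            {t. t > 0 \<and> (h has_real_derivative 0) (at t)} = {t1, t2} \<and>
            (\<exists>e>0. \<forall>s. s > 0 \<and> \<bar>s - t1\<bar> < e \<longrightarrow> h t1 \<le> h s) \<and> h t1 < 0 \<and>
            (\<forall>s>0. h s \<le> h t2) \<and> h t2 > 0)
       \<and> (\<exists>R0 R1. 0 < R0 \<and> R0 < R1 \<and> h R0 = 0 \<and> h R1 = 0 \<and>
            (\<forall>t>0. h t > 0 \<longleftrightarrow> R0 < t \<and> t < R1))"
proof -
  define r where "r = q * gammaq (real N) p q"
  define P where "P = pstar (real N) p"
  define A where "A = \<mu> / q * C * a powr (q * (1 - gammaq (real N) p q))"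
  define B where "B = 1 / (P * S powr (P / p))"
  have "0 < r" "r < p" using q_gammaq_bounds[of "real N" p q] assms by (simp_all add: r_def)
  have "p < P" using less_pstar[of p "real N"] assms by (simp add: P_def)
  have "0 < A" "0 < B" using assms \<open>p < P\<close> by (simp_all add: A_def B_def)
  have h_eq: "h = (\<lambda>t. t powr p / p - A * t powr r - B * t powr P)"
    unfolding h_def by (simp add: fun_eq_iff hfun_def A_def B_def r_def P_def Let_def)
  have "\<mu> * a powr (q * (1 - gammaq (real N) p q)) < alpha_C1 (real N) p q S C"
    using assms(10) by (simp add: alpha_def)
  then have "A < ((p - r) / (p * B * (P - r))) powr ((p - r) / (P - p)) * (P - p) / (p * (P - r))"
    using alpha_C1_eq[of S "real N" p q C] assms \<open>p < P\<close> \<open>r < p\<close>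
    by (simp add: A_def r_def P_def B_def field_simps)
  from powr_three_terms_positive_at_peak[OF \<open>0 < r\<close> \<open>r < p\<close> \<open>p < P\<close> \<open>0 < B\<close> this]
  have "local_min_global_max_profile h"
    unfolding h_eq by (intro powr_three_terms_profile \<open>0 < r\<close> \<open>r < p\<close> \<open>p < P\<close> \<open>0 < A\<close> \<open>0 < B\<close>)
  then show ?thesis unfolding local_min_global_max_profile_def .
qed

end
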